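(* Let $f$ be a Moufang permutation on an abelian group $(X,+)$ with associated biadditive mapping $\beta$, and let $i\in\mathbb Z$. Define $\beta_i(x,y)=\sum_{k\in I(0,i)}f^{-3k}(\beta(x,y))$. Then $f^i$ is a Moufang permutation on $(X,+)$ with associated biadditive mapping $\beta_i$, and $$\mathrm{Img}(\beta_i)\subseteq\mathrm{Img}(\beta)\subseteq\mathrm{Rad}(\beta)\subseteq\mathrm{Rad}(\beta_i).$$
   Context: A permutation $f$ of an abelian group $(X,+)$ is a Moufang permutation if the map $\beta(x,y)=f^{-1}(f(x)+f(y))-x-y$ (P1) is symmetric, alternating ($\beta(x,x)=0$) and biadditive, and for all $x,y,z\in X$: (P2) $\beta(\beta(x,y),z)=0$ and (P3) $\beta(f(x),f(y))=f(\beta(f^3(x),y))$; $\beta$ is the associated biadditive mapping. $\mathrm{Img}$ denotes image; $\mathrm{Rad}(\beta)=\{x\in X:\beta(x,y)=0\ \forall y\in X\}$. $I(i,j)$ is $\emptyset$ if $i=j$, $\{i,\dots,j-1\}$ if $i<j$, $\{j,\dots,i-1\}$ if $j<i$. *)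

theory Defs
  imports Main
begin

text \<open>The abelian group (X,+) is the whole type 'a of class ab_group_add.\<close>

definition assoc_map :: "('a::ab_group_add \<Rightarrow> 'a) \<Rightarrow> 'a \<Rightarrow> 'a \<Rightarrow> 'a" where
  "assoc_map f x y = inv f (f x + f y) - x - y"

definition biadditive :: "('a::ab_group_add \<Rightarrow> 'a \<Rightarrow> 'a) \<Rightarrow> bool" where
  "biadditive b \<longleftrightarrow> (\<forall>x y z. b (x + y) z = b x z + b y z) \<and> (\<forall>x y z. b x (y + z) = b x y + b x z)"

definition moufang_perm :: "('a::ab_group_add \<Rightarrow> 'a) \<Rightarrow> bool" where
  "moufang_perm f \<longleftrightarrow> bij f \<and>
     (let \<beta> = assoc_map f in
        (\<forall>x y. \<beta> x y = \<beta> y x) \<and> (\<forall>x. \<beta> x x = 0) \<and> biadditive \<beta> \<and>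
        (\<forall>x y z. \<beta> (\<beta> x y) z = 0) \<and>
        (\<forall>x y. \<beta> (f x) (f y) = f (\<beta> ((f ^^ 3) x) y)))"

definition fpow :: "('a \<Rightarrow> 'a) \<Rightarrow> int \<Rightarrow> 'a \<Rightarrow> 'a" where
  "fpow f i = (if 0 \<le> i then f ^^ nat i else inv f ^^ nat (- i))"

definition Iset :: "int \<Rightarrow> int \<Rightarrow> int set" where
  "Iset i j = (if i = j then {} else if i < j then {i..j-1} else {j..i-1})"

definition Img :: "('a \<Rightarrow> 'a \<Rightarrow> 'b) \<Rightarrow> 'b set" where
  "Img b = {b x y | x y. True}"

definition Rad :: "('a \<Rightarrow> 'a \<Rightarrow> 'b::zero) \<Rightarrow> 'a set" where
  "Rad b = {x. \<forall>y. b x y = 0}"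

end

theory Submission
  imports Defs
begin

text \<open>
  Write \<open>g = f\<^sup>-\<^sup>1\<close>. By (P2) every value of \<open>\<beta>\<close> lies in \<open>Rad \<beta>\<close>, and since
  \<open>f (x + y + \<beta> x y) = f x + f y\<close>, both \<open>f\<close> and \<open>g\<close> are additive as soon as one summand lies
  in \<open>Rad \<beta>\<close>; they also preserve \<open>Rad \<beta>\<close>. Combining (P3) with the symmetry of \<open>\<beta>\<close> gives
  \<open>\<beta> (f a) (f b) = g\<^sup>2 (\<beta> a b)\<close> and \<open>\<beta> (f\<^sup>3 a) b = g\<^sup>3 (\<beta> a b)\<close>. An induction on \<open>n\<close> then
  yields \<open>f\<^sup>n (x + y + \<Sum>k<n. g\<^sup>3\<^sup>k (\<beta> x y)) = f\<^sup>n x + f\<^sup>n y\<close>, which identifies the associated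
  map of \<open>f\<^sup>n\<close>, and the Moufang axioms for it follow by moving the \<open>g\<^sup>3\<^sup>k\<close> through \<open>\<beta>\<close>.
  Negative powers reduce to positive ones because \<open>g\<close> is itself a Moufang permutation with
  associated map \<open>f\<^sup>3 \<circ> \<beta>\<close>. Finally \<open>\<beta>\<^sub>i x y = \<beta> (\<Sum>k. f\<^sup>3\<^sup>k x) y\<close>, which gives the inclusion of images.
\<close>

lemma funpow_closed:
  assumes "\<And>n. n \<in> N \<Longrightarrow> h n \<in> N" and "n \<in> N"
  shows "(h ^^ m) n \<in> N"
  by (induction m) (simp_all add: assms)

lemma funpow_add_closed:
  assumes closed: "\<And>n. n \<in> N \<Longrightarrow> h n \<in> N"
    and additive: "\<And>a n. n \<in> N \<Longrightarrow> h (a + n) = h a + h n"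
    and "n \<in> N"
  shows "(h ^^ m) (a + n) = (h ^^ m) a + (h ^^ m) n"
  by (induction m) (simp_all add: additive funpow_closed[OF closed \<open>n \<in> N\<close>])

lemma map_sum_additive_on:
  assumes additive: "\<And>a n. n \<in> N \<Longrightarrow> h (a + n) = h a + h n" and "h 0 = 0"
    and "finite A" and "t ` A \<subseteq> N"
  shows "h (sum t A) = (\<Sum>k\<in>A. h (t k))"
  using \<open>finite A\<close> \<open>t ` A \<subseteq> N\<close>
proof (induction A rule: finite_induct)
  case (insert x F)
  then have "h (sum t (insert x F)) = h (sum t F) + h (t x)"
    using additive[of "t x" "sum t F"] by (simp add: add.commute)
  with insert show ?case by (simp add: add.commute)
qed (simp add: \<open>h 0 = 0\<close>)

locale moufang_permutation =
  fixes f :: "'a::ab_group_add \<Rightarrow> 'a"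
  assumes moufang: "moufang_perm f"
begin

abbreviation \<beta> :: "'a \<Rightarrow> 'a \<Rightarrow> 'a" where "\<beta> \<equiv> assoc_map f"

lemma bij_f: "bij f"
  using moufang unfolding moufang_perm_def by simp

lemma assoc_commute: "\<beta> x y = \<beta> y x"
  using moufang unfolding moufang_perm_def Let_def by blast

lemma assoc_self: "\<beta> x x = 0"
  using moufang unfolding moufang_perm_def Let_def by blast

lemma assoc_add_left: "\<beta> (x + y) z = \<beta> x z + \<beta> y z"
  and assoc_add_right: "\<beta> x (y + z) = \<beta> x y + \<beta> x z"
  using moufang unfolding moufang_perm_def Let_def biadditive_def by blast+

lemma assoc_assoc_left: "\<beta> (\<beta> x y) z = 0"
  using moufang unfolding moufang_perm_def Let_def by blast

lemma assoc_f_f: "\<beta> (f x) (f y) = f (\<beta> (f (f (f x))) y)"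
  using moufang unfolding moufang_perm_def Let_def by (simp add: numeral_3_eq_3)

lemma f_inv_f_eq [simp]: "f (inv f z) = z"
  using bij_f by (simp add: bij_is_surj surj_f_inv_f)

lemma inv_f_f_eq [simp]: "inv f (f z) = z"
  using bij_f by (simp add: bij_is_inj)

lemma f_add_eq: "f (x + y + \<beta> x y) = f x + f y"
  unfolding assoc_map_def by simp

lemma assoc_zero_left [simp]: "\<beta> 0 y = 0"
  using assoc_add_left[of 0 0 y] by simp

lemma f_zero [simp]: "f 0 = 0"
  using f_add_eq[of 0 0] by (simp add: assoc_self)

lemma inv_f_zero [simp]: "inv f 0 = 0"
  using inv_f_f_eq[of 0] by simp

lemma assoc_sum_left: "finite A \<Longrightarrow> \<beta> (sum t A) y = (\<Sum>k\<in>A. \<beta> (t k) y)"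
  by (induction A rule: finite_induct) (simp_all add: assoc_add_left)

lemma assoc_in_Rad: "\<beta> x y \<in> Rad \<beta>"
  unfolding Rad_def by (simp add: assoc_assoc_left)

lemma assoc_eq_f_assoc: "\<beta> a b = f (\<beta> (f (f a)) (inv f b))"
  using assoc_f_f[of "inv f a" "inv f b"] by simp

lemma assoc_f_f_eq: "\<beta> (f a) (f b) = inv f (inv f (\<beta> a b))"
proof -
  have "\<beta> (f (f a)) (inv f b) = \<beta> (inv f b) (f (f a))" by (rule assoc_commute)
  also have "\<dots> = f (\<beta> (f b) (f a))" using assoc_eq_f_assoc[of "inv f b" "f (f a)"] by simp
  finally have "\<beta> a b = f (f (\<beta> (f a) (f b)))"
    using assoc_eq_f_assoc[of a b] assoc_commute[of "f b"] by simp
  then show ?thesis by simp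
qed

lemma assoc_inv_f_inv_f: "\<beta> (inv f a) (inv f b) = f (f (\<beta> a b))"
  using assoc_f_f_eq[of "inv f a" "inv f b"] by simp

lemma assoc_f3_left: "\<beta> (f (f (f x))) y = inv f (inv f (inv f (\<beta> x y)))"
proof -
  have "f (\<beta> (f (f (f x))) y) = inv f (inv f (\<beta> x y))"
    using assoc_f_f[of x y] assoc_f_f_eq[of x y] by simp
  then show ?thesis by (metis inv_f_f_eq)
qed

lemma assoc_inv_f3_left: "\<beta> (inv f (inv f (inv f x))) y = f (f (f (\<beta> x y)))"
  using assoc_f3_left[of "inv f (inv f (inv f x))" y] by (metis f_inv_f_eq)

lemma f_in_Rad: "n \<in> Rad \<beta> \<Longrightarrow> f n \<in> Rad \<beta>"
  unfolding Rad_def using assoc_f_f_eq[of n "inv f z" for z] by simp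

lemma inv_f_in_Rad: "n \<in> Rad \<beta> \<Longrightarrow> inv f n \<in> Rad \<beta>"
  unfolding Rad_def using assoc_inv_f_inv_f[of n "f z" for z] by simp

lemma f_add_Rad: "n \<in> Rad \<beta> \<Longrightarrow> f (a + n) = f a + f n"
  using f_add_eq[of a n] assoc_commute[of a n] by (simp add: Rad_def)

lemma inv_f_add_Rad:
  assumes "n \<in> Rad \<beta>"
  shows "inv f (a + n) = inv f a + inv f n"
proof -
  have "f (inv f a + inv f n) = a + n"
    using f_add_Rad[OF inv_f_in_Rad[OF assms]] by simp
  then show ?thesis by (metis inv_f_f_eq)
qed

lemma funpow_inv_f_in_Rad: "n \<in> Rad \<beta> \<Longrightarrow> (inv f ^^ m) n \<in> Rad \<beta>"
  by (simp add: funpow_closed inv_f_in_Rad)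

lemma funpow_f_add_Rad: "n \<in> Rad \<beta> \<Longrightarrow> (f ^^ m) (a + n) = (f ^^ m) a + (f ^^ m) n"
  and funpow_inv_f_add_Rad: "n \<in> Rad \<beta> \<Longrightarrow> (inv f ^^ m) (a + n) = (inv f ^^ m) a + (inv f ^^ m) n"
  by (meson funpow_add_closed f_in_Rad inv_f_in_Rad f_add_Rad inv_f_add_Rad)+

lemma funpow_f_zero [simp]: "(f ^^ m) 0 = 0"
  and funpow_inv_f_zero [simp]: "(inv f ^^ m) 0 = 0"
  by (induction m) simp_all

lemma funpow_f_sum_Rad:
  "finite A \<Longrightarrow> t ` A \<subseteq> Rad \<beta> \<Longrightarrow> (f ^^ m) (sum t A) = (\<Sum>k\<in>A. (f ^^ m) (t k))"
  by (rule map_sum_additive_on[OF funpow_f_add_Rad]) simp_all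

lemma funpow_f_inv_f [simp]: "(f ^^ m) ((inv f ^^ m) z) = z"
  using fn_o_inv_fn_is_id[OF bij_f, of m] by (simp add: fun_eq_iff)

lemma funpow_inv_f_f [simp]: "(inv f ^^ m) ((f ^^ m) z) = z"
  using inv_fn_o_fn_is_id[OF bij_f, of m] by (simp add: fun_eq_iff)

lemma assoc_funpow_funpow: "\<beta> ((f ^^ m) x) ((f ^^ m) y) = (inv f ^^ (2 * m)) (\<beta> x y)"
  by (induction m) (simp_all add: assoc_f_f_eq)

lemma assoc_funpow3_left: "\<beta> ((f ^^ (3 * m)) x) y = (inv f ^^ (3 * m)) (\<beta> x y)"
proof (induction m)
  case (Suc m)
  have "3 * Suc m = Suc (Suc (Suc (3 * m)))" by simp
  with Suc show ?case by (simp only: funpow.simps comp_apply assoc_f3_left)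
qed simp

lemma assoc_inv_funpow3_left: "\<beta> ((inv f ^^ (3 * m)) x) y = (f ^^ (3 * m)) (\<beta> x y)"
  using assoc_funpow3_left[of m "(inv f ^^ (3 * m)) x" y] by (metis funpow_f_inv_f)

definition assoc_iter :: "nat \<Rightarrow> 'a \<Rightarrow> 'a \<Rightarrow> 'a" where
  "assoc_iter n x y = (\<Sum>k<n. (inv f ^^ (3 * k)) (\<beta> x y))"

lemma assoc_iter_in_Rad: "assoc_iter n x y \<in> Rad \<beta>"
  unfolding assoc_iter_def Rad_def
  using funpow_inv_f_in_Rad[OF assoc_in_Rad] by (simp add: assoc_sum_left Rad_def)

lemma funpow_f_add_assoc_iter:
  "(f ^^ n) (x + y + assoc_iter n x y) = (f ^^ n) x + (f ^^ n) y"
proof (induction n)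
  case (Suc n)
  define m where "m = (inv f ^^ (3 * n)) (\<beta> x y)"
  have m_Rad: "m \<in> Rad \<beta>" unfolding m_def by (rule funpow_inv_f_in_Rad[OF assoc_in_Rad])
  have "inv f ^^ (3 * n) = inv f ^^ n \<circ> inv f ^^ (2 * n)"
    by (simp add: funpow_add[symmetric])
  then have shift: "(f ^^ n) m = (inv f ^^ (2 * n)) (\<beta> x y)"
    unfolding m_def by simp
  have "(f ^^ Suc n) (x + y + assoc_iter (Suc n) x y) = f ((f ^^ n) ((x + y + assoc_iter n x y) + m))"
    by (simp add: assoc_iter_def m_def add.assoc)
  also have "\<dots> = f ((f ^^ n) x + (f ^^ n) y + \<beta> ((f ^^ n) x) ((f ^^ n) y))"
    by (simp add: funpow_f_add_Rad[OF m_Rad] Suc shift assoc_funpow_funpow)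
  also have "\<dots> = (f ^^ Suc n) x + (f ^^ Suc n) y" by (simp add: f_add_eq)
  finally show ?case .
qed (simp add: assoc_iter_def)

lemma assoc_map_funpow: "assoc_map (f ^^ n) = assoc_iter n"
proof (intro ext)
  fix x y
  show "assoc_map (f ^^ n) x y = assoc_iter n x y"
    unfolding assoc_map_def inv_fn[OF bij_f] funpow_f_add_assoc_iter[symmetric] by simp
qed

lemma moufang_perm_funpow: "moufang_perm (f ^^ n)"
proof -
  let ?S = "assoc_iter n"
  have sym: "?S x y = ?S y x" for x y
    unfolding assoc_iter_def using assoc_commute by simp
  have alt: "?S x x = 0" for x
    unfolding assoc_iter_def by (simp add: assoc_self)
  have biadd: "biadditive ?S"
    unfolding biadditive_def assoc_iter_def
    by (simp add: assoc_add_left assoc_add_right funpow_inv_f_add_Rad assoc_in_Rad sum.distrib)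
  have p2: "?S (?S x y) z = 0" for x y z
    using assoc_iter_in_Rad[of n x y] unfolding assoc_iter_def[of n "?S x y"] Rad_def by simp
  have p3: "?S ((f ^^ n) x) ((f ^^ n) y) = (f ^^ n) (?S (((f ^^ n) ^^ 3) x) y)" for x y
  proof -
    have shift: "(f ^^ n) ((inv f ^^ (3 * k)) ((inv f ^^ (3 * n)) z)) = (inv f ^^ (3 * k)) ((inv f ^^ (2 * n)) z)"
      for k z
    proof -
      have "inv f ^^ (3 * k) \<circ> inv f ^^ (3 * n) = inv f ^^ n \<circ> (inv f ^^ (3 * k) \<circ> inv f ^^ (2 * n))"
        by (simp add: funpow_add[symmetric] algebra_simps)
      then show ?thesis by (simp add: fun_eq_iff)
    qed
    have "(f ^^ n) (?S (((f ^^ n) ^^ 3) x) y)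
        = (f ^^ n) (\<Sum>k<n. (inv f ^^ (3 * k)) ((inv f ^^ (3 * n)) (\<beta> x y)))"
      unfolding assoc_iter_def funpow_mult
      using assoc_funpow3_left[of n x y] by (simp add: mult.commute)
    also have "\<dots> = (\<Sum>k<n. (inv f ^^ (3 * k)) ((inv f ^^ (2 * n)) (\<beta> x y)))"
      by (subst funpow_f_sum_Rad) (auto simp: shift funpow_inv_f_in_Rad assoc_in_Rad)
    also have "\<dots> = ?S ((f ^^ n) x) ((f ^^ n) y)"
      unfolding assoc_iter_def by (simp add: assoc_funpow_funpow)
    finally show ?thesis by simp
  qed
  show ?thesis
    unfolding moufang_perm_def Let_def assoc_map_funpow
    using sym alt biadd p2 p3 bij_fn[OF bij_f] by blast
qed

lemma assoc_add_self: "\<beta> x y + \<beta> x y = 0"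
proof -
  have "0 = \<beta> (x + y) (x + y)" by (simp add: assoc_self)
  also have "\<dots> = \<beta> x y + \<beta> y x"
    unfolding assoc_add_left assoc_add_right by (simp add: assoc_self)
  finally show ?thesis by (simp add: assoc_commute[of y x])
qed

lemma assoc_map_inv: "assoc_map (inv f) x y = f (f (f (\<beta> x y)))"
proof -
  have "f (inv f x + inv f y) + f (\<beta> (inv f x) (inv f y)) = x + y"
    using f_add_eq[of "inv f x" "inv f y"] f_add_Rad[OF assoc_in_Rad] by simp
  then have "f (inv f x + inv f y) = x + y - f (f (f (\<beta> x y)))"
    by (simp add: assoc_inv_f_inv_f eq_diff_eq)
  moreover have "- f (f (f (\<beta> x y))) = f (f (f (\<beta> x y)))"
    using assoc_add_self[of "inv f (inv f (inv f x))" y]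
    by (simp add: assoc_inv_f3_left add_eq_0_iff)
  ultimately show ?thesis
    unfolding assoc_map_def inv_inv_eq[OF bij_f] by simp
qed

lemma moufang_perm_inv: "moufang_perm (inv f)"
proof -
  let ?B = "\<lambda>x y. f (f (f (\<beta> x y)))"
  have A: "assoc_map (inv f) = ?B" by (intro ext) (rule assoc_map_inv)
  have biadd: "biadditive ?B"
    unfolding biadditive_def by (simp add: assoc_add_left assoc_add_right f_add_Rad f_in_Rad assoc_in_Rad)
  have p2: "?B (?B x y) z = 0" for x y z
    using f_in_Rad[OF f_in_Rad[OF f_in_Rad[OF assoc_in_Rad]]] by (simp add: Rad_def)
  have p3: "?B (inv f x) (inv f y) = inv f (?B ((inv f ^^ 3) x) y)" for x y
    by (simp add: numeral_3_eq_3 assoc_inv_f_inv_f assoc_inv_f3_left)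
  show ?thesis
    unfolding moufang_perm_def Let_def A
    using bij_f biadd p2 p3 assoc_commute assoc_self by (simp add: bij_imp_bij_inv)
qed

end

lemma fpow_of_nat: "fpow f (int m) = f ^^ m"
  unfolding fpow_def by simp

lemma fpow_neg_of_nat: "fpow f (- int m) = inv f ^^ m"
  unfolding fpow_def by (cases "m = 0") simp_all

lemma Iset_0_of_nat: "Iset 0 (int n) = int ` {..<n}"
  unfolding Iset_def lessThan_atLeast0 image_int_atLeastLessThan by auto

lemma Iset_0_neg_of_nat: "Iset 0 (- int n) = (\<lambda>j. - int j - 1) ` {..<n}"
proof -
  have "{- int n..- 1} = (\<lambda>j. - int j - 1) ` {..<n}"
  proof (intro set_eqI iffI)
    fix x assume "x \<in> {- int n..- 1}"
    then show "x \<in> (\<lambda>j. - int j - 1) ` {..<n}"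
      by (intro image_eqI[where x = "nat (- x - 1)"]) auto
  qed auto
  then show ?thesis unfolding Iset_def by simp
qed

context moufang_permutation
begin

lemma fpow_zero [simp]: "fpow f k 0 = 0"
  unfolding fpow_def by simp

lemma assoc_fpow3_left: "\<beta> (fpow f (3 * k) x) y = fpow f (-3 * k) (\<beta> x y)"
proof (cases k rule: int_cases2)
  case (nonneg m)
  then show ?thesis
    using assoc_funpow3_left[of m] fpow_of_nat[of f "3 * m"] fpow_neg_of_nat[of f "3 * m"] by simp
next
  case (nonpos m)
  then show ?thesis
    using assoc_inv_funpow3_left[of m] fpow_of_nat[of f "3 * m"] fpow_neg_of_nat[of f "3 * m"] by simp
qed

lemma assoc_map_fpow: "assoc_map (fpow f i) x y = (\<Sum>k\<in>Iset 0 i. fpow f (-3 * k) (\<beta> x y))"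
proof (cases i rule: int_cases2)
  case (nonneg n)
  have "(\<Sum>k\<in>Iset 0 i. fpow f (-3 * k) (\<beta> x y)) = (\<Sum>k<n. fpow f (- int (3 * k)) (\<beta> x y))"
    unfolding nonneg Iset_0_of_nat by (simp add: sum.reindex)
  then show ?thesis
    unfolding nonneg fpow_of_nat fpow_neg_of_nat assoc_map_funpow assoc_iter_def by simp
next
  case (nonpos n)
  interpret inv: moufang_permutation "inv f"
    by (rule moufang_permutation.intro[OF moufang_perm_inv])
  have "(\<Sum>k\<in>Iset 0 i. fpow f (-3 * k) (\<beta> x y)) = (\<Sum>k<n. fpow f (int (3 * k + 3)) (\<beta> x y))"
    unfolding nonpos Iset_0_neg_of_nat by (simp add: sum.reindex inj_on_def algebra_simps)
  also have "\<dots> = (\<Sum>k<n. (f ^^ (3 * k)) ((f ^^ 3) (\<beta> x y)))"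
    by (simp only: fpow_of_nat funpow_add comp_apply)
  finally show ?thesis
    unfolding nonpos fpow_neg_of_nat inv.assoc_map_funpow inv.assoc_iter_def
    by (simp add: inv_inv_eq[OF bij_f] assoc_map_inv numeral_3_eq_3)
qed

lemma moufang_perm_fpow: "moufang_perm (fpow f i)"
proof (cases i rule: int_cases2)
  case (nonneg n)
  then show ?thesis by (simp add: fpow_of_nat moufang_perm_funpow)
next
  case (nonpos n)
  interpret inv: moufang_permutation "inv f"
    by (rule moufang_permutation.intro[OF moufang_perm_inv])
  show ?thesis unfolding nonpos fpow_neg_of_nat by (rule inv.moufang_perm_funpow)
qed

end

theorem mainTheorem13:
  fixes f :: "'a::ab_group_add \<Rightarrow> 'a" and i :: int
  assumes "moufang_perm f"
  defines "\<beta> \<equiv> assoc_map f"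
  defines "\<beta>i \<equiv> (\<lambda>x y. \<Sum>k\<in>Iset 0 i. fpow f (-3 * k) (\<beta> x y))"
  shows "moufang_perm (fpow f i) \<and> assoc_map (fpow f i) = \<beta>i \<and>
         Img \<beta>i \<subseteq> Img \<beta> \<and> Img \<beta> \<subseteq> Rad \<beta> \<and> Rad \<beta> \<subseteq> Rad \<beta>i"
proof -
  interpret moufang_permutation f by (rule moufang_permutation.intro[OF assms(1)])
  have "\<beta>i x y = \<beta> (\<Sum>k\<in>Iset 0 i. fpow f (3 * k) x) y" for x y
    unfolding \<beta>i_def \<beta>_def by (simp add: assoc_sum_left Iset_def assoc_fpow3_left)
  then have "Img \<beta>i \<subseteq> Img \<beta>"
    unfolding Img_def by blast
  moreover have "Img \<beta> \<subseteq> Rad \<beta>"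
    unfolding Img_def \<beta>_def using assoc_in_Rad by blast
  moreover have "Rad \<beta> \<subseteq> Rad \<beta>i"
    unfolding Rad_def \<beta>i_def by auto
  ultimately show ?thesis
    using moufang_perm_fpow assoc_map_fpow unfolding \<beta>i_def \<beta>_def by blast
qed

end
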